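(* Let $p$ be an odd prime. Any transversal of $B_p$ other than the main diagonal $\{(i,i,2i): i\in\mathbb{Z}_p\}$ contains at least $\log_2(p)+1$ triples $(r,c,s)$ with $r\neq c$. Equivalently, any transversal of $B_p$ meets the main diagonal in either $p$ cells or at most $p-\log_2(p)-1$ cells.
   Context: $B_p$ is the Latin square of order $p$ viewed as the set of triples $\{(i,j,i+j \bmod p): i,j\in\mathbb{Z}_p\}$ (row, column, symbol). A transversal of a Latin square of order $p$ is a set of $p$ of its triples that contains each row, each column and each symbol exactly once. The main diagonal consists of the cells $(i,i)$. *)

theory Defs
  imports "HOL-Computational_Algebra.Primes" Complex_Main
begin

(* Z_p represented as {0..<p}; B_p as a set of (row, column, symbol) triples *)
definition B :: "nat \<Rightarrow> (nat \<times> nat \<times> nat) set" where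
  "B p = {(i, j, (i + j) mod p) | i j. i < p \<and> j < p}"

definition is_transversal :: "nat \<Rightarrow> (nat \<times> nat \<times> nat) set \<Rightarrow> (nat \<times> nat \<times> nat) set \<Rightarrow> bool" where
  "is_transversal p L T \<longleftrightarrow> T \<subseteq> L \<and> finite T \<and> card T = p \<and>
     (\<forall>r<p. \<exists>!t\<in>T. fst t = r) \<and>
     (\<forall>c<p. \<exists>!t\<in>T. fst (snd t) = c) \<and>
     (\<forall>s<p. \<exists>!t\<in>T. snd (snd t) = s)"

definition main_diagonal :: "nat \<Rightarrow> (nat \<times> nat \<times> nat) set" where
  "main_diagonal p = {(i, i, (2 * i) mod p) | i. i < p}"

end

theory Submission
  imports Defs "HOL-Number_Theory.Cong"
begin

text \<open>A transversal of \<open>B\<^sub>p\<close> is the graph of a permutation \<open>\<sigma>\<close> of \<open>\<int>\<^sub>p\<close> such that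
  \<open>i \<mapsto> i + \<sigma> i\<close> is a permutation as well. If \<open>\<sigma> m \<noteq> m\<close>, the cell \<open>(a, \<sigma> a)\<close> carrying the
  symbol \<open>2m\<close> has \<open>a \<noteq> m\<close> and \<open>\<sigma> a \<noteq> a\<close>; so the non-fixed points of \<open>\<sigma>\<close> form a nonempty
  set \<open>S\<close> in which every element is the midpoint of two elements of \<open>S\<close>.

  Such a set has at least \<open>log\<^sub>2 p + 1\<close> elements. Fix midpoint maps \<open>a, b\<close> on \<open>S\<close> and
  a minimal nonempty \<open>F \<subseteq> S\<close> closed under them; then every point of \<open>F\<close> reaches any
  \<open>r \<in> F\<close>. Play a chip-firing game on \<open>F\<close>: a vertex \<open>m \<noteq> r\<close> holding at least two chips sends one
  to \<open>a m\<close> and one to \<open>b m\<close>. Firing preserves \<open>\<Sum> c v * (v - r)\<close> modulo \<open>p\<close> and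
  terminates, since every vertex reaches the sink \<open>r\<close>. As \<open>a r - r\<close> is invertible modulo
  \<open>p\<close>, starting with suitably many chips on \<open>a r\<close> shows that every residue is a subset sum
  of \<open>{v - r | v \<in> F - {r}}\<close>, whence \<open>p \<le> 2 ^ (card F - 1)\<close>.\<close>

lemma sum_add_indicator_mult:
  fixes c f :: "'a \<Rightarrow> 'b::comm_ring_1"
  assumes "finite F" "x \<in> F"
  shows "(\<Sum>v\<in>F. (c v + (if v = x then k else 0)) * f v) = (\<Sum>v\<in>F. c v * f v) + k * f x"
proof -
  have "(c v + (if v = x then k else 0)) * f v = c v * f v + (if v = x then k * f v else 0)" for v
    by (simp add: distrib_right)
  then show ?thesis using assms by (simp add: sum.distrib)
qed

lemma sum_zero_one_weights:
  fixes c f :: "'a \<Rightarrow> int"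
  assumes "\<forall>v\<in>F - {r}. c v = 0 \<or> c v = 1" "finite F" "f r = 0"
  shows "(\<Sum>v\<in>F. c v * f v) = (\<Sum>v\<in>{v \<in> F - {r}. c v = 1}. f v)"
proof -
  have "(\<Sum>v\<in>F. c v * f v) = (\<Sum>v\<in>F - {r}. c v * f v)"
    using assms(2,3) by (intro sum.mono_neutral_right) auto
  also have "\<dots> = (\<Sum>v\<in>F - {r}. if c v = 1 then f v else 0)"
    using assms(1) by (intro sum.cong) auto
  also have "\<dots> = (\<Sum>v\<in>{v \<in> F - {r}. c v = 1}. f v)"
    using assms(2) by (intro sum.inter_filter[symmetric]) simp
  finally show ?thesis .
qed

lemma chip_firing_subset_sum:
  fixes f w c :: "'a \<Rightarrow> int" and a b :: "'a \<Rightarrow> 'a" and q :: int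
  assumes fin: "finite F" and closed: "\<forall>m\<in>F. a m \<in> F \<and> b m \<in> F"
    and fire_cong: "\<forall>m\<in>F. [f (a m) + f (b m) = 2 * f m] (mod q)"
    and w_nonneg: "\<forall>v\<in>F. 0 \<le> w v" and w_fire: "\<forall>m\<in>F - {r}. w (a m) + w (b m) < 2 * w m"
    and f_r: "f r = 0"
    and c_nonneg: "\<forall>v\<in>F. 0 \<le> c v"
  shows "\<exists>A \<subseteq> F - {r}. [(\<Sum>v\<in>A. f v) = (\<Sum>v\<in>F. c v * f v)] (mod q)"
  using c_nonneg
proof (induction "nat (\<Sum>v\<in>F. c v * w v)" arbitrary: c rule: less_induct)
  case less
  show ?case
  proof (cases "\<forall>v\<in>F - {r}. c v \<le> 1")
    case True
    then have "\<forall>v\<in>F - {r}. c v = 0 \<or> c v = 1" using less.prems by force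
    then have "(\<Sum>v\<in>F. c v * f v) = (\<Sum>v\<in>{v \<in> F - {r}. c v = 1}. f v)"
      using fin f_r by (rule sum_zero_one_weights)
    then show ?thesis by (intro exI[of _ "{v \<in> F - {r}. c v = 1}"]) auto
  next
    case False
    then obtain m where "m \<in> F - {r}" "\<not> c m \<le> 1" by blast
    then have m: "m \<in> F" "m \<noteq> r" "2 \<le> c m" by auto
    have am: "a m \<in> F" and bm: "b m \<in> F" using closed m(1) by auto
    define c' where "c' v = c v + (if v = m then -2 else 0) + (if v = a m then 1 else 0)
      + (if v = b m then 1 else 0)" for v
    have sum_c': "(\<Sum>v\<in>F. c' v * g v) = (\<Sum>v\<in>F. c v * g v) - 2 * g m + g (a m) + g (b m)" for g
      unfolding c'_def using fin m(1) am bm by (simp add: sum_add_indicator_mult)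
    have c'_nonneg: "\<forall>v\<in>F. 0 \<le> c' v" using less.prems m(3) unfolding c'_def by auto
    have "0 \<le> (\<Sum>v\<in>F. c' v * w v)" using c'_nonneg w_nonneg by (simp add: sum_nonneg)
    moreover have "w (a m) + w (b m) < 2 * w m" using w_fire m(1,2) by blast
    then have "(\<Sum>v\<in>F. c' v * w v) < (\<Sum>v\<in>F. c v * w v)"
      unfolding sum_c' by linarith
    ultimately have "nat (\<Sum>v\<in>F. c' v * w v) < nat (\<Sum>v\<in>F. c v * w v)" by linarith
    then obtain A where A: "A \<subseteq> F - {r}" "[(\<Sum>v\<in>A. f v) = (\<Sum>v\<in>F. c' v * f v)] (mod q)"
      using less.hyps[OF _ c'_nonneg] by blast
    have "[(\<Sum>v\<in>F. c v * f v) - 2 * f m + (f (a m) + f (b m))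
        = (\<Sum>v\<in>F. c v * f v) - 2 * f m + 2 * f m] (mod q)"
      using fire_cong m(1) by (intro cong_add[OF cong_refl]) blast
    moreover have "(\<Sum>v\<in>F. c' v * f v) = (\<Sum>v\<in>F. c v * f v) - 2 * f m + (f (a m) + f (b m))"
      using sum_c'[of f] by simp
    ultimately have "[(\<Sum>v\<in>F. c' v * f v) = (\<Sum>v\<in>F. c v * f v)] (mod q)"
      by simp
    with A show ?thesis by (blast intro: cong_trans)
  qed
qed

lemma exists_closed_subset_reaching_point:
  fixes E :: "'a rel"
  assumes "finite S" "S \<noteq> {}" "E `` S \<subseteq> S"
  obtains F r where "F \<subseteq> S" "r \<in> F" "E `` F \<subseteq> F" "\<forall>v\<in>F. (v, r) \<in> E\<^sup>*"
proof -
  let ?closed = "\<lambda>F. F \<subseteq> S \<and> F \<noteq> {} \<and> E `` F \<subseteq> F"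
  obtain F where F: "?closed F" and minimal: "\<And>G. ?closed G \<Longrightarrow> card F \<le> card G"
    using ex_has_least_nat[of ?closed S card] assms by blast
  then obtain r where r: "r \<in> F" by blast
  have "F \<subseteq> E\<^sup>* `` {v}" if v: "v \<in> F" for v
  proof -
    have "E\<^sup>* `` {v} \<subseteq> E\<^sup>* `` F" using v by blast
    also have "\<dots> = F" using F by (simp add: Image_closed_trancl)
    finally have sub: "E\<^sup>* `` {v} \<subseteq> F" .
    have "E `` (E\<^sup>* `` {v}) \<subseteq> E\<^sup>* `` {v}" by (auto intro: rtrancl_into_rtrancl)
    with sub v F have "?closed (E\<^sup>* `` {v})" by blast
    then have "card F \<le> card (E\<^sup>* `` {v})" by (rule minimal)
    moreover have "finite F" using F \<open>finite S\<close> finite_subset by blast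
    ultimately show ?thesis using sub card_seteq by blast
  qed
  with F r that show thesis by blast
qed

lemma exists_firing_potential:
  fixes a b :: "'a \<Rightarrow> 'a"
  assumes "finite F" and reach: "\<forall>v\<in>F. (v, r) \<in> {(v, u). u = a v \<or> u = b v}\<^sup>*"
  obtains w :: "'a \<Rightarrow> int"
  where "\<forall>v. 0 \<le> w v" "\<forall>m\<in>F - {r}. w (a m) + w (b m) < 2 * w m"
proof -
  let ?E = "{(v, u). u = a v \<or> u = b v}"
  define d where "d v = (LEAST k. (v, r) \<in> ?E ^^ k)" for v
  have d_le: "(v, r) \<in> ?E ^^ k \<Longrightarrow> d v \<le> k" for v k
    unfolding d_def by (rule Least_le)
  have d_step: "d (a m) < d m \<or> d (b m) < d m" if m: "m \<in> F - {r}" for m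
  proof -
    have "(m, r) \<in> ?E\<^sup>*" using reach m by simp
    then obtain k where "(m, r) \<in> ?E ^^ k" using rtrancl_imp_relpow by blast
    then have dm: "(m, r) \<in> ?E ^^ d m" unfolding d_def by (rule LeastI[where P = "\<lambda>k. (m, r) \<in> ?E ^^ k"])
    have "d m \<noteq> 0"
    proof
      assume "d m = 0"
      with dm m show False by simp
    qed
    then obtain k where k: "d m = Suc k" using not0_implies_Suc by blast
    then obtain y where y: "(m, y) \<in> ?E" "(y, r) \<in> ?E ^^ k"
      using relpow_Suc_D2[OF dm[unfolded k]] by blast
    from y(2) have "d y < d m" using d_le k by fastforce
    with y(1) show ?thesis by auto
  qed
  define D where "D = Max (d ` F)"
  text \<open>When \<open>m\<close> fires, the chip sent to the successor
    closer to \<open>r\<close> loses at least \<open>2 * 3 ^ (D - d m)\<close> in weight, while the other chip gains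
    less than \<open>3 ^ (D - d m)\<close>.\<close>
  define w where "w v = (3::int) ^ D - 3 ^ (D - d v)" for v
  have "(3::int) ^ (D - d v) \<le> 3 ^ D" for v by (rule power_increasing) simp_all
  then have "\<forall>v. 0 \<le> w v" unfolding w_def by simp
  moreover have "w (a m) + w (b m) < 2 * w m" if m: "m \<in> F - {r}" for m
  proof -
    have "d m \<le> D" unfolding D_def using \<open>finite F\<close> m by simp
    have w_desc: "w y \<le> 3 ^ D - 3 * 3 ^ (D - d m)" if "d y < d m" for y
    proof -
      have "Suc (D - d m) \<le> D - d y" using that \<open>d m \<le> D\<close> by linarith
      then have "(3::int) ^ Suc (D - d m) \<le> 3 ^ (D - d y)" by (intro power_increasing) auto
      then show ?thesis unfolding w_def by simp
    qed
    have w_bound: "w v \<le> 3 ^ D - 1" for v unfolding w_def by simp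
    have "w (a m) + w (b m) \<le> 2 * 3 ^ D - 3 * 3 ^ (D - d m) - 1"
      using d_step[OF m] w_desc[of "a m"] w_desc[of "b m"] w_bound[of "a m"] w_bound[of "b m"]
      by linarith
    moreover have "(0::int) < 3 ^ (D - d m)" by simp
    ultimately show ?thesis unfolding w_def[of m] right_diff_distrib by linarith
  qed
  ultimately show thesis using that by blast
qed

lemma card_bound_of_subset_sums_mod:
  fixes g :: "'a \<Rightarrow> int" and p :: nat
  assumes "finite A" and cover: "\<forall>t. \<exists>B \<subseteq> A. [(\<Sum>v\<in>B. g v) = t] (mod int p)"
  shows "p \<le> 2 ^ card A"
proof -
  have "{0..<int p} \<subseteq> (\<lambda>B. (\<Sum>v\<in>B. g v) mod int p) ` Pow A"
  proof
    fix t assume t: "t \<in> {0..<int p}"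
    obtain B where "B \<subseteq> A" "[(\<Sum>v\<in>B. g v) = t] (mod int p)" using cover by blast
    moreover have "t mod int p = t" using t by simp
    ultimately show "t \<in> (\<lambda>B. (\<Sum>v\<in>B. g v) mod int p) ` Pow A"
      unfolding cong_def by (metis Pow_iff image_eqI)
  qed
  then have "card {0..<int p} \<le> card (Pow A)"
    using \<open>finite A\<close> card_image_le card_mono finite_Pow_iff finite_imageI order_trans by metis
  then show ?thesis using \<open>finite A\<close> by (simp add: card_Pow)
qed

lemma exists_nonneg_multiple_cong:
  fixes x q t :: int
  assumes "coprime x q" "0 < q"
  obtains n where "0 \<le> n" "[n * x = t] (mod q)"
proof -
  obtain u where u: "[x * u = 1] (mod q)" using cong_solve_coprime_int assms(1) by blast
  define n where "n = (t * u) mod q"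
  have "[n = t * u] (mod q)" unfolding n_def by simp
  then have "[n * x = t * u * x] (mod q)" by (rule cong_scalar_right)
  also have "t * u * x = t * (x * u)" by (simp add: ac_simps)
  also have "[t * (x * u) = t * 1] (mod q)" using u by (rule cong_scalar_left)
  finally have "[n * x = t] (mod q)" by simp
  moreover have "0 \<le> n" unfolding n_def using assms(2) by simp
  ultimately show thesis using that by blast
qed

lemma subset_sums_cover_residues:
  fixes f w :: "'a \<Rightarrow> int" and a b :: "'a \<Rightarrow> 'a" and q :: int
  assumes fin: "finite F" and closed: "\<forall>m\<in>F. a m \<in> F \<and> b m \<in> F"
    and fire_cong: "\<forall>m\<in>F. [f (a m) + f (b m) = 2 * f m] (mod q)"
    and w_nonneg: "\<forall>v\<in>F. 0 \<le> w v" and w_fire: "\<forall>m\<in>F - {r}. w (a m) + w (b m) < 2 * w m"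
    and f_r: "f r = 0"
    and v0: "v0 \<in> F" "coprime (f v0) q" "0 < q"
  shows "\<exists>A \<subseteq> F - {r}. [(\<Sum>v\<in>A. f v) = t] (mod q)"
proof -
  obtain n where n: "0 \<le> n" "[n * f v0 = t] (mod q)"
    using exists_nonneg_multiple_cong[OF v0(2,3)] by blast
  define c where "c v = (if v = v0 then n else 0)" for v
  have "c v * f v = (if v = v0 then n * f v else 0)" for v by (simp add: c_def)
  then have sum_c: "(\<Sum>v\<in>F. c v * f v) = n * f v0" using fin v0(1) by simp
  have "\<forall>v\<in>F. 0 \<le> c v" using n(1) by (simp add: c_def)
  from chip_firing_subset_sum[OF fin closed fire_cong w_nonneg w_fire f_r this]
  obtain A where A: "A \<subseteq> F - {r}" "[(\<Sum>v\<in>A. f v) = (\<Sum>v\<in>F. c v * f v)] (mod q)"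
    by blast
  from A(2) have "[(\<Sum>v\<in>A. f v) = n * f v0] (mod q)" by (simp only: sum_c)
  then have "[(\<Sum>v\<in>A. f v) = t] (mod q)" using n(2) by (rule cong_trans)
  with A(1) show ?thesis by blast
qed

lemma coprime_diff_of_distinct_less_prime:
  fixes p x y :: nat
  assumes "prime p" "x < p" "y < p" "x \<noteq> y"
  shows "coprime (int x - int y) (int p)"
proof -
  have "\<not> int p dvd int x - int y"
  proof
    assume "int p dvd int x - int y"
    moreover have "int x - int y \<noteq> 0" using assms(4) by simp
    ultimately have "\<bar>int p\<bar> \<le> \<bar>int x - int y\<bar>" by (intro dvd_imp_le_int)
    with assms(2,3) show False by simp
  qed
  then have "coprime (int p) (int x - int y)" using assms(1) by (intro prime_imp_coprime) simp_all
  then show ?thesis by (simp only: coprime_commute)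
qed

lemma midpoint_maps_card_bound:
  fixes p :: nat and S :: "nat set" and a b :: "nat \<Rightarrow> nat"
  assumes "prime p" "S \<subseteq> {..<p}" "S \<noteq> {}"
    and ab: "\<forall>m\<in>S. a m \<in> S \<and> b m \<in> S \<and> a m \<noteq> m \<and> [a m + b m = 2 * m] (mod p)"
  shows "2 * p \<le> 2 ^ card S"
proof -
  have "finite S" using assms(2) finite_subset by blast
  let ?E = "{(v, u). u = a v \<or> u = b v}"
  have "?E `` S \<subseteq> S" using ab by blast
  then obtain F r where F: "F \<subseteq> S" "r \<in> F" "?E `` F \<subseteq> F" "\<forall>v\<in>F. (v, r) \<in> ?E\<^sup>*"
    using exists_closed_subset_reaching_point[OF \<open>finite S\<close> assms(3)] by blast
  have "finite F" using F(1) \<open>finite S\<close> finite_subset by blast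
  have closed: "\<forall>m\<in>F. a m \<in> F \<and> b m \<in> F"
  proof
    fix m assume "m \<in> F"
    then have "a m \<in> ?E `` F" "b m \<in> ?E `` F" by auto
    with F(3) show "a m \<in> F \<and> b m \<in> F" by blast
  qed
  obtain w :: "nat \<Rightarrow> int" where w: "\<forall>v. 0 \<le> w v" "\<forall>m\<in>F - {r}. w (a m) + w (b m) < 2 * w m"
    using exists_firing_potential[OF \<open>finite F\<close> F(4)] .
  define f where "f v = int v - int r" for v
  have fire_cong: "\<forall>m\<in>F. [f (a m) + f (b m) = 2 * f m] (mod int p)"
  proof
    fix m assume "m \<in> F"
    then have "[int (a m) + int (b m) = 2 * int m] (mod int p)"
      using ab F(1) by (auto simp flip: cong_int_iff)
    then have "[int (a m) + int (b m) - 2 * int r = 2 * int m - 2 * int r] (mod int p)"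
      using cong_diff cong_refl by blast
    then show "[f (a m) + f (b m) = 2 * f m] (mod int p)" by (simp add: f_def algebra_simps)
  qed
  have "a r \<in> F" "a r \<noteq> r" "a r < p" "r < p" using closed ab F(1,2) assms(2) by auto
  then have "coprime (f (a r)) (int p)"
    unfolding f_def using assms(1) by (intro coprime_diff_of_distinct_less_prime)
  then have "\<forall>t. \<exists>A \<subseteq> F - {r}. [(\<Sum>v\<in>A. f v) = t] (mod int p)"
    using subset_sums_cover_residues[OF \<open>finite F\<close> closed fire_cong _ w(2), of "a r"]
      w(1) \<open>a r \<in> F\<close> prime_gt_0_nat[OF assms(1)] by (simp add: f_def)
  then have "p \<le> 2 ^ card (F - {r})"
    using card_bound_of_subset_sums_mod \<open>finite F\<close> by blast
  moreover have "card F = Suc (card (F - {r}))"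
    using \<open>finite F\<close> F(2) by (rule card.remove)
  moreover have "card F \<le> card S" using F(1) \<open>finite S\<close> by (rule card_mono[rotated])
  ultimately have "2 * p \<le> 2 ^ card F" by simp
  also have "\<dots> \<le> 2 ^ card S" using \<open>card F \<le> card S\<close> by (rule power_increasing) simp
  finally show ?thesis .
qed

text \<open>The condition \<open>a \<noteq> m\<close> excludes the trivial representation \<open>m = (m + m) / 2\<close>.\<close>
definition is_midpoint_set :: "nat \<Rightarrow> nat set \<Rightarrow> bool" where
  "is_midpoint_set p S \<longleftrightarrow> (\<forall>m\<in>S. \<exists>a\<in>S. \<exists>b\<in>S. a \<noteq> m \<and> [a + b = 2 * m] (mod p))"

theorem midpoint_set_card_bound:
  fixes p :: nat and S :: "nat set"
  assumes "prime p" "S \<subseteq> {..<p}" "S \<noteq> {}" "is_midpoint_set p S"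
  shows "2 * p \<le> 2 ^ card S"
proof -
  have "\<forall>m\<in>S. \<exists>a. \<exists>b. a \<in> S \<and> b \<in> S \<and> a \<noteq> m \<and> [a + b = 2 * m] (mod p)"
    using assms(4) unfolding is_midpoint_set_def by blast
  from bchoice[OF this] obtain a
    where "\<forall>m\<in>S. \<exists>b. a m \<in> S \<and> b \<in> S \<and> a m \<noteq> m \<and> [a m + b = 2 * m] (mod p)" ..
  from bchoice[OF this] obtain b
    where "\<forall>m\<in>S. a m \<in> S \<and> b m \<in> S \<and> a m \<noteq> m \<and> [a m + b m = 2 * m] (mod p)" ..
  then show ?thesis using midpoint_maps_card_bound assms(1-3) by blast
qed

lemma transversal_B_eq_graph:
  assumes "is_transversal p (B p) T"
  obtains \<sigma> where "T = (\<lambda>i. (i, \<sigma> i, (i + \<sigma> i) mod p)) ` {..<p}" "\<sigma> ` {..<p} \<subseteq> {..<p}"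
proof -
  have TB: "T \<subseteq> B p" and row: "\<forall>r<p. \<exists>!t\<in>T. fst t = r"
    using assms unfolding is_transversal_def by auto
  have T_cell: "\<exists>i j. i < p \<and> j < p \<and> t = (i, j, (i + j) mod p)" if t: "t \<in> T" for t
    using TB t unfolding B_def by blast
  define \<sigma> where "\<sigma> i = (SOME j. j < p \<and> (i, j, (i + j) mod p) \<in> T)" for i
  have \<sigma>: "\<sigma> i < p \<and> (i, \<sigma> i, (i + \<sigma> i) mod p) \<in> T" if i: "i < p" for i
  proof -
    obtain t where t: "t \<in> T" "fst t = i" using row i by blast
    then obtain j where "j < p" "t = (i, j, (i + j) mod p)" using T_cell by fastforce
    with t(1) have "\<exists>j. j < p \<and> (i, j, (i + j) mod p) \<in> T" by blast
    then show ?thesis unfolding \<sigma>_def by (rule someI_ex)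
  qed
  have \<sigma>_unique: "j = \<sigma> i" if ij: "(i, j, (i + j) mod p) \<in> T" "i < p" for i j
  proof -
    have "(i, j, (i + j) mod p) = (i, \<sigma> i, (i + \<sigma> i) mod p)"
      using row ij \<sigma>[of i] by (metis fst_conv)
    then show ?thesis by simp
  qed
  have "T = (\<lambda>i. (i, \<sigma> i, (i + \<sigma> i) mod p)) ` {..<p}"
  proof
    show "T \<subseteq> (\<lambda>i. (i, \<sigma> i, (i + \<sigma> i) mod p)) ` {..<p}"
    proof
      fix t assume "t \<in> T"
      with T_cell obtain i j where "i < p" "t = (i, j, (i + j) mod p)" by blast
      with \<sigma>_unique \<open>t \<in> T\<close> show "t \<in> (\<lambda>i. (i, \<sigma> i, (i + \<sigma> i) mod p)) ` {..<p}" by auto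
    qed
  qed (use \<sigma> in auto)
  with \<sigma> that show thesis by blast
qed

lemma transversal_graph_orthomorphism:
  fixes \<sigma> :: "nat \<Rightarrow> nat"
  assumes "is_transversal p L ((\<lambda>i. (i, \<sigma> i, (i + \<sigma> i) mod p)) ` {..<p})"
    and "\<sigma> ` {..<p} \<subseteq> {..<p}"
  shows "inj_on \<sigma> {..<p}" "{..<p} \<subseteq> (\<lambda>i. (i + \<sigma> i) mod p) ` {..<p}"
proof -
  let ?T = "(\<lambda>i. (i, \<sigma> i, (i + \<sigma> i) mod p)) ` {..<p}"
  have col: "\<forall>c<p. \<exists>!t\<in>?T. fst (snd t) = c" and sym: "\<forall>s<p. \<exists>!t\<in>?T. snd (snd t) = s"
    using assms(1) unfolding is_transversal_def by auto
  show "inj_on \<sigma> {..<p}"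
  proof (rule inj_onI)
    fix i i' assume i: "i \<in> {..<p}" "i' \<in> {..<p}" "\<sigma> i = \<sigma> i'"
    then have "\<sigma> i < p" using assms(2) by auto
    with col i have "(i, \<sigma> i, (i + \<sigma> i) mod p) = (i', \<sigma> i', (i' + \<sigma> i') mod p)"
      by (metis (no_types, lifting) fst_conv snd_conv image_eqI)
    then show "i = i'" by simp
  qed
  show "{..<p} \<subseteq> (\<lambda>i. (i + \<sigma> i) mod p) ` {..<p}"
  proof
    fix s assume "s \<in> {..<p}"
    with sym obtain t where "t \<in> ?T" "snd (snd t) = s" by blast
    then show "s \<in> (\<lambda>i. (i + \<sigma> i) mod p) ` {..<p}" by auto
  qed
qed

lemma non_fixed_points_is_midpoint_set:
  fixes p :: nat and \<sigma> :: "nat \<Rightarrow> nat"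
  assumes "odd p" "\<sigma> ` {..<p} \<subseteq> {..<p}" "inj_on \<sigma> {..<p}"
    and orth: "{..<p} \<subseteq> (\<lambda>i. (i + \<sigma> i) mod p) ` {..<p}"
  shows "is_midpoint_set p {i. i < p \<and> \<sigma> i \<noteq> i}"
  unfolding is_midpoint_set_def
proof
  fix m assume "m \<in> {i. i < p \<and> \<sigma> i \<noteq> i}"
  then have m: "m < p" "\<sigma> m \<noteq> m" by auto
  have "(2 * m) mod p < p" using m(1) by simp
  with orth obtain a where a: "a < p" "(a + \<sigma> a) mod p = (2 * m) mod p" by auto
  then have mid: "[a + \<sigma> a = 2 * m] (mod p)" by (simp add: cong_def)
  have \<sigma>_lt: "\<sigma> i < p" if "i < p" for i using assms(2) that by auto
  have "a \<noteq> m"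
  proof
    assume "a = m"
    with mid have "[m + \<sigma> m = m + m] (mod p)" by (simp add: mult_2)
    then have "\<sigma> m = m"
      using m(1) \<sigma>_lt[OF m(1)] by (simp add: cong_add_lcancel_nat cong_less_modulus_unique_nat)
    with m(2) show False ..
  qed
  moreover have "\<sigma> a \<noteq> a"
  proof
    assume "\<sigma> a = a"
    with mid have "[2 * a = 2 * m] (mod p)" by (simp add: mult_2)
    then have "[a = m] (mod p)" using \<open>odd p\<close> by (simp add: cong_mult_lcancel_nat)
    with a(1) m(1) \<open>a \<noteq> m\<close> show False by (simp add: cong_less_modulus_unique_nat)
  qed
  moreover have "\<sigma> (\<sigma> a) \<noteq> \<sigma> a"
    using \<open>\<sigma> a \<noteq> a\<close> a(1) \<sigma>_lt[OF a(1)] inj_onD[OF assms(3)] by blast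
  ultimately show "\<exists>a\<in>{i. i < p \<and> \<sigma> i \<noteq> i}. \<exists>b\<in>{i. i < p \<and> \<sigma> i \<noteq> i}. a \<noteq> m \<and> [a + b = 2 * m] (mod p)"
    using a(1) \<sigma>_lt[OF a(1)] mid by blast
qed

lemma log2_succ_le_of_double_le_power:
  fixes p k :: nat
  assumes "0 < p" "2 * p \<le> 2 ^ k"
  shows "log 2 (real p) + 1 \<le> real k"
proof -
  have "log 2 (real (2 * p)) \<le> real k" using assms by (intro log2_of_power_le) simp_all
  moreover have "log 2 (real (2 * p)) = 1 + log 2 (real p)" using assms(1) by (simp add: log_mult)
  ultimately show ?thesis by simp
qed

theorem corollary6p2:
  fixes p :: nat and T :: "(nat \<times> nat \<times> nat) set"
  assumes "prime p" and "odd p"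
    and "is_transversal p (B p) T"
    and "T \<noteq> main_diagonal p"
  shows "real (card {t \<in> T. fst t \<noteq> fst (snd t)}) \<ge> log 2 (real p) + 1"
proof -
  obtain \<sigma> where graph: "T = (\<lambda>i. (i, \<sigma> i, (i + \<sigma> i) mod p)) ` {..<p}"
    and range: "\<sigma> ` {..<p} \<subseteq> {..<p}"
    using transversal_B_eq_graph[OF assms(3)] by blast
  note orth = range transversal_graph_orthomorphism[OF assms(3)[unfolded graph] range]
  define S where "S = {i. i < p \<and> \<sigma> i \<noteq> i}"
  have "{t \<in> T. fst t \<noteq> fst (snd t)} = (\<lambda>i. (i, \<sigma> i, (i + \<sigma> i) mod p)) ` S"
    unfolding graph S_def by auto
  then have card_eq: "card {t \<in> T. fst t \<noteq> fst (snd t)} = card S"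
    by (simp add: card_image inj_on_def)
  have "S \<noteq> {}"
  proof
    assume "S = {}"
    then have "T = main_diagonal p" unfolding graph main_diagonal_def S_def by (auto simp: mult_2)
    with assms(4) show False ..
  qed
  then have "2 * p \<le> 2 ^ card S"
    using midpoint_set_card_bound[OF assms(1) _ _ non_fixed_points_is_midpoint_set[OF assms(2) orth]]
    unfolding S_def by auto
  then show ?thesis
    using log2_succ_le_of_double_le_power prime_gt_0_nat[OF assms(1)] card_eq by simp
qed

end
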